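(* In the spectrum pricing game described in the context (with $m<l$), let $(\psi_1,\ldots,\psi_n)$ be any symmetric Nash equilibrium. Then for every state $i\in\{1,\ldots,n\}$, the distribution function $\psi_i$ is continuous, i.e. it has no atoms. In particular, the game has no pure-strategy symmetric Nash equilibrium.
   Context: Spectrum pricing game. There are $l\ge 2$ primaries and $m$ secondaries, $1\le m<l$; there are $n$ channel states $1,\ldots,n$, plus state $0$ meaning "unavailable". Each primary owns one channel, which independently of the others is in state $i\in\{1,\ldots,n\}$ with probability $q_i>0$ and in state $0$ with probability $1-q$, where $q=\sum_{i=1}^n q_i\in(0,1)$. For each state $i\ge1$ there is a penalty function $g_i$, continuous and strictly increasing in the price, with inverse $f_i$, also continuous and strictly increasing. Quoting price $p$ for a channel in state $i$ means the channel offers penalty $g_i(p)$; equivalently, choosing penalty $x$ in state $i$ means charging price $f_i(x)$. Higher states are better: $g_i(p)>g_j(p)$ for all $p$ and $f_i(x)<f_j(x)$ for all $x$ whenever $i<j$. There is a transition cost $c>0$ and a maximum acceptable penalty $v$ with $g_1(c)<v$. We assume that all points used below lie in the common domain of the $f_i$, and that for all $j<k$ and all $x>y>g_j(c)$, $$\frac{f_j(y)-c}{f_k(y)-c}<\frac{f_j(x)-c}{f_k(x)-c}. \qquad (\ast)$$ Each primary knows only its own channel state. A primary whose channel is in state $j\ge1$ draws its penalty from a distribution function $\psi_j$, independently of everything else. A primary in state $0$ offers penalty $v+1$, which is equivalent to not offering its channel. If $Y$ channels are offered with penalty at most $v$, the $\min(Y,m)$ channels with the lowest penalties are sold, with ties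 broken uniformly at random. A primary selling at price $p$ earns $p-c$; otherwise it earns $0$. Strategies and equilibrium. A symmetric strategy profile is one in which every primary uses the same $(\psi_1,\ldots,\psi_n)$. Given such a profile, let $r(x)$ be the probability that a given primary's channel offered at penalty $x$ is sold, and set $\phi_j(x)=(f_j(x)-c)\,r(x)$, the expected profit of choosing penalty $x$ in state $j$. A symmetric Nash equilibrium (NE) is a symmetric profile in which no primary, in any state $j$, can increase its expected profit by unilaterally replacing $\psi_j$ with any other distribution. A penalty $x$ is a best response in state $j$ if $\phi_j(x)=\sup_{y\in\mathbb{R}}\phi_j(y)=:u_{j,\max}$. *)

theory Defs
  imports "HOL-Probability.Probability"
begin

text \<open>A symmetric strategy profile is given by probability measures M j on the reals
  (j = 1..n); the distribution function psi_j is cdf (M j).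
  Each other primary's penalty is: v+1 with probability 1 - q (state 0), and
  drawn from M j with probability q j (state j).\<close>

definition qtot :: "nat \<Rightarrow> (nat \<Rightarrow> real) \<Rightarrow> real" where
  "qtot n q = (\<Sum>j\<in>{1..n}. q j)"

definition p_lt :: "nat \<Rightarrow> (nat \<Rightarrow> real) \<Rightarrow> real \<Rightarrow> (nat \<Rightarrow> real measure) \<Rightarrow> real \<Rightarrow> real" where
  "p_lt n q v M x = (if v + 1 < x then 1 - qtot n q else 0)
      + (\<Sum>j\<in>{1..n}. q j * measure (M j) {..<x})"

definition p_eq :: "nat \<Rightarrow> (nat \<Rightarrow> real) \<Rightarrow> real \<Rightarrow> (nat \<Rightarrow> real measure) \<Rightarrow> real \<Rightarrow> real" where
  "p_eq n q v M x = (if x = v + 1 then 1 - qtot n q else 0)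
      + (\<Sum>j\<in>{1..n}. q j * measure (M j) {x})"

text \<open>Sale probability of own channel at penalty x given a other channels
  strictly cheaper and b others tied at x (ties broken uniformly at random).\<close>
definition share :: "nat \<Rightarrow> nat \<Rightarrow> nat \<Rightarrow> real" where
  "share m a b = (if m \<le> a then 0 else min 1 (real (m - a) / real (b + 1)))"

text \<open>r(x): probability that a channel offered at penalty x is sold when the other
  l - 1 primaries play the symmetric profile M (multinomial over the numbers
  of other channels with lower / equal / higher penalty).\<close>
definition sell_prob :: "nat \<Rightarrow> nat \<Rightarrow> nat \<Rightarrow> (nat \<Rightarrow> real) \<Rightarrow> real
    \<Rightarrow> (nat \<Rightarrow> real measure) \<Rightarrow> real \<Rightarrow> real" where
  "sell_prob l m n q v M x =
     (if v < x then 0 else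
      (let pl = p_lt n q v M x; pe = p_eq n q v M x; pg = 1 - pl - pe in
       \<Sum>a\<in>{0..l-1}. \<Sum>b\<in>{0..l-1-a}.
         real ((l-1) choose a) * real ((l-1-a) choose b)
         * pl ^ a * pe ^ b * pg ^ (l-1-a-b) * share m a b))"

definition profit :: "nat \<Rightarrow> nat \<Rightarrow> nat \<Rightarrow> (nat \<Rightarrow> real) \<Rightarrow> (nat \<Rightarrow> real \<Rightarrow> real)
    \<Rightarrow> real \<Rightarrow> real \<Rightarrow> (nat \<Rightarrow> real measure) \<Rightarrow> nat \<Rightarrow> real \<Rightarrow> real" where
  "profit l m n q f c v M j x = (f j x - c) * sell_prob l m n q v M x"

definition sym_NE :: "nat \<Rightarrow> nat \<Rightarrow> nat \<Rightarrow> (nat \<Rightarrow> real) \<Rightarrow> (nat \<Rightarrow> real \<Rightarrow> real)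
    \<Rightarrow> real \<Rightarrow> real \<Rightarrow> (nat \<Rightarrow> real measure) \<Rightarrow> bool" where
  "sym_NE l m n q f c v M \<longleftrightarrow>
     (\<forall>j\<in>{1..n}. real_distribution (M j)
        \<and> integrable (M j) (profit l m n q f c v M j)
        \<and> (\<forall>M'. real_distribution M' \<and> integrable M' (profit l m n q f c v M j) \<longrightarrow>
              (\<integral>x. profit l m n q f c v M j x \<partial>M') \<le> (\<integral>x. profit l m n q f c v M j x \<partial>M j)))"

end

theory Submission
  imports Defs
begin

(* Write P for the expected profit of a primary in state i as a function of its penalty and
   E for its equilibrium payoff.  Deviating to a point mass shows P y <= E for every y, and
   a penalty x carrying positive probability must then satisfy P x >= E (otherwise the mass
   at x would drag the expectation below E); moreover E >= P v > 0.  So x is an acceptable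
   offer (x <= v) with a positive margin.  Every other primary in state i also sits at x with
   positive probability, hence ties at x occur with positive probability and are broken at
   random; quoting slightly less than x wins all of them.  Thus the left limit of the sale
   probability at x strictly exceeds its value at x, and some y < x earns more than E. *)

definition sale_poly :: "nat \<Rightarrow> nat \<Rightarrow> real \<Rightarrow> real \<Rightarrow> real \<Rightarrow> real" where
  "sale_poly N m pl pe pg = (\<Sum>a\<in>{0..N}. \<Sum>b\<in>{0..N-a}.
      real (N choose a) * real ((N-a) choose b) * pl ^ a * pe ^ b * pg ^ (N-a-b) * share m a b)"

lemma share_nonneg: "0 \<le> share m a b"
  by (simp add: share_def)

lemma share_le_indicator: "share m a b \<le> (if a < m then 1 else 0)"
  by (simp add: share_def)

lemma sale_poly_nonneg:
  assumes "0 \<le> pl" "0 \<le> pe" "0 \<le> pg"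
  shows "0 \<le> sale_poly N m pl pe pg"
  unfolding sale_poly_def using assms
  by (intro sum_nonneg mult_nonneg_nonneg) (auto simp: share_nonneg)

(* If nobody undercuts or ties, the channel is sold: this bounds the sale probability below. *)
lemma sale_poly_ge_no_competition:
  assumes "0 \<le> pl" "0 \<le> pe" "0 \<le> pg" "1 \<le> m"
  shows "pg ^ N \<le> sale_poly N m pl pe pg"
proof -
  let ?t = "\<lambda>a b. real (N choose a) * real ((N-a) choose b) * pl ^ a * pe ^ b * pg ^ (N-a-b)
              * share m a b"
  have "pg ^ N = ?t 0 0" using assms by (simp add: share_def)
  also have "\<dots> \<le> (\<Sum>b\<in>{0..N-0}. ?t 0 b)"
    by (rule member_le_sum) (use assms in \<open>auto intro!: mult_nonneg_nonneg simp: share_nonneg\<close>)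
  also have "\<dots> \<le> (\<Sum>a\<in>{0..N}. \<Sum>b\<in>{0..N-a}. ?t a b)"
    by (rule member_le_sum[where f="\<lambda>a. \<Sum>b\<in>{0..N-a}. ?t a b"])
       (use assms in \<open>auto intro!: sum_nonneg mult_nonneg_nonneg simp: share_nonneg\<close>)
  finally show ?thesis unfolding sale_poly_def .
qed

lemma sale_poly_no_ties:
  "sale_poly N m pl 0 s
     = (\<Sum>a\<in>{0..N}. real (N choose a) * pl ^ a * s ^ (N-a) * (if a < m then 1 else 0))"
  unfolding sale_poly_def
proof (intro sum.cong refl)
  fix a assume "a \<in> {0..N}"
  show "(\<Sum>b\<in>{0..N-a}. real (N choose a) * real ((N-a) choose b) * pl ^ a * 0 ^ b * s ^ (N-a-b)
          * share m a b) = real (N choose a) * pl ^ a * s ^ (N-a) * (if a < m then 1 else 0)"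
    by (simp add: sum.atLeast_Suc_atMost[of 0] share_def power_0_left)
qed

(* The tie-free sale probability with overcut probability pe + pg, expanded binomially
   according to how many of the N - a non-undercutting competitors would have tied. *)
lemma sale_poly_no_ties_expanded:
  "(\<Sum>a\<in>{0..N}. \<Sum>b\<in>{0..N-a}. real (N choose a) * pl ^ a * (if a < m then 1 else 0)
      * (real ((N-a) choose b) * pe ^ b * pg ^ (N-a-b)))
   = sale_poly N m pl 0 (pe + pg)"
  unfolding sale_poly_no_ties
proof (intro sum.cong refl)
  fix a assume "a \<in> {0..N}"
  have "(\<Sum>b\<in>{0..N-a}. real ((N-a) choose b) * pe ^ b * pg ^ (N-a-b)) = (pe + pg) ^ (N-a)"
    by (simp add: binomial_ring atLeast0AtMost diff_diff_add)
  then show "(\<Sum>b\<in>{0..N-a}. real (N choose a) * pl ^ a * (if a < m then 1 else 0)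
      * (real ((N-a) choose b) * pe ^ b * pg ^ (N-a-b)))
      = real (N choose a) * pl ^ a * (pe + pg) ^ (N-a) * (if a < m then 1 else 0)"
    by (simp add: sum_distrib_left[symmetric])
qed

(* Ties cost sales: if ties have positive probability and there are at least as many
   competitors as buyers, moving all tying competitors above us strictly raises the sale
   probability (when everybody ties, not every tying channel can be sold). *)
lemma sale_poly_tie_loss:
  assumes "0 \<le> pl" "0 < pe" "0 \<le> pg" "1 \<le> m" "m \<le> N"
  shows "sale_poly N m pl pe pg < sale_poly N m pl 0 (pe + pg)"
proof -
  let ?t = "\<lambda>a b. real (N choose a) * real ((N-a) choose b) * pl ^ a * pe ^ b * pg ^ (N-a-b)
              * share m a b"
  let ?u = "\<lambda>a b. real (N choose a) * pl ^ a * (if a < m then 1 else 0)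
              * (real ((N-a) choose b) * pe ^ b * pg ^ (N-a-b))"
  have t_le_u: "?t a b \<le> ?u a b" for a b
  proof -
    have "?t a b = (real (N choose a) * pl ^ a) * (real ((N-a) choose b) * pe ^ b * pg ^ (N-a-b))
                   * share m a b"
      by (simp add: algebra_simps)
    also have "\<dots> \<le> (real (N choose a) * pl ^ a) * (real ((N-a) choose b) * pe ^ b * pg ^ (N-a-b))
                   * (if a < m then 1 else 0)"
      using assms by (intro mult_left_mono share_le_indicator) (auto intro!: mult_nonneg_nonneg)
    also have "\<dots> = ?u a b" by (simp add: algebra_simps)
    finally show ?thesis .
  qed
  have all_tied: "?t 0 N < ?u 0 N"
  proof -
    have "share m 0 N < 1" using assms by (simp add: share_def min_def field_simps)
    then have "pe ^ N * share m 0 N < pe ^ N * 1" using assms by (intro mult_strict_left_mono) auto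
    then show ?thesis using assms by simp
  qed
  have inner_strict: "(\<Sum>b\<in>{0..N-0}. ?t 0 b) < (\<Sum>b\<in>{0..N-0}. ?u 0 b)"
  proof (rule sum_strict_mono_ex1)
    show "\<forall>b\<in>{0..N-0}. ?t 0 b \<le> ?u 0 b" using t_le_u by blast
    show "\<exists>b\<in>{0..N-0}. ?t 0 b < ?u 0 b" using all_tied by (intro bexI[where x=N]) auto
  qed simp
  have "sale_poly N m pl pe pg = (\<Sum>a\<in>{0..N}. \<Sum>b\<in>{0..N-a}. ?t a b)"
    unfolding sale_poly_def ..
  also have "\<dots> < (\<Sum>a\<in>{0..N}. \<Sum>b\<in>{0..N-a}. ?u a b)"
  proof (rule sum_strict_mono_ex1)
    show "\<forall>a\<in>{0..N}. (\<Sum>b\<in>{0..N-a}. ?t a b) \<le> (\<Sum>b\<in>{0..N-a}. ?u a b)"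
      using t_le_u by (intro ballI sum_mono) blast
    show "\<exists>a\<in>{0..N}. (\<Sum>b\<in>{0..N-a}. ?t a b) < (\<Sum>b\<in>{0..N-a}. ?u a b)"
      using inner_strict by (intro bexI[where x=0]) auto
  qed simp
  also have "\<dots> = sale_poly N m pl 0 (pe + pg)"
    by (rule sale_poly_no_ties_expanded)
  finally show ?thesis .
qed

lemma tendsto_sale_poly:
  assumes "(pl \<longlongrightarrow> PL) F" "(pe \<longlongrightarrow> PE) F" "(pg \<longlongrightarrow> PG) F"
  shows "((\<lambda>y. sale_poly N m (pl y) (pe y) (pg y)) \<longlongrightarrow> sale_poly N m PL PE PG) F"
  unfolding sale_poly_def by (intro tendsto_intros assms)

lemma sell_prob_sale_poly:
  "sell_prob l m n q v M y = (if v < y then 0 else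
     sale_poly (l-1) m (p_lt n q v M y) (p_eq n q v M y) (1 - p_lt n q v M y - p_eq n q v M y))"
  unfolding sell_prob_def sale_poly_def Let_def by simp

context finite_borel_measure
begin

lemma measure_lessThan_at_left: "((\<lambda>y. measure M {..<y}) \<longlongrightarrow> measure M {..<a}) (at_left a)"
proof (rule tendsto_at_left_sequentially[of "a - 1"])
  fix f :: "nat \<Rightarrow> real" assume f: "incseq f" "f \<longlonglongrightarrow> a" "\<And>n. f n < a"
  then have "(\<lambda>n. measure M {..<f n}) \<longlonglongrightarrow> measure M (\<Union>n. {..<f n})"
    by (intro finite_Lim_measure_incseq) (auto simp: incseq_def)
  also have "(\<Union>n. {..<f n}) = {..<a}"
    by (auto dest!: order_tendstoD(1)[OF f(2)] eventually_happens'[OF sequentially_bot]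
             intro: less_trans f(3))
  finally show "(\<lambda>n. measure M {..<f n}) \<longlonglongrightarrow> measure M {..<a}" .
qed auto

lemma lessThan_plus_singleton: "measure M {..<y} + measure M {y} = cdf M y"
  unfolding cdf_def ivl_disj_un(2)[symmetric] by (subst finite_measure_Union) auto

lemma measure_singleton_at_left: "((\<lambda>y. measure M {y}) \<longlongrightarrow> 0) (at_left a)"
proof -
  have "((\<lambda>y. cdf M y - measure M {..<y}) \<longlongrightarrow> measure M {..<a} - measure M {..<a}) (at_left a)"
    by (intro tendsto_diff cdf_at_left measure_lessThan_at_left)
  then show ?thesis by (simp add: lessThan_plus_singleton[symmetric])
qed

end

lemma p_lt_below: "y \<le> v \<Longrightarrow> p_lt n q v M y = (\<Sum>j\<in>{1..n}. q j * measure (M j) {..<y})"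
  by (simp add: p_lt_def)

lemma p_eq_below: "y \<le> v \<Longrightarrow> p_eq n q v M y = (\<Sum>j\<in>{1..n}. q j * measure (M j) {y})"
  by (simp add: p_eq_def)

(* pl and pe are nonnegative and, since a competitor is absent with probability
   1 - qtot > 0, the overcut probability pg = 1 - pl - pe is strictly positive. *)
lemma profile_probs_bounds:
  assumes RD: "\<forall>j\<in>{1..n}. real_distribution (M j)" and q_nonneg: "\<forall>j\<in>{1..n}. 0 \<le> q j"
    and "qtot n q < 1" and "y \<le> v"
  shows "0 \<le> p_lt n q v M y" "0 \<le> p_eq n q v M y" "0 < 1 - p_lt n q v M y - p_eq n q v M y"
proof -
  show "0 \<le> p_lt n q v M y" "0 \<le> p_eq n q v M y"
    unfolding p_lt_below[OF \<open>y \<le> v\<close>] p_eq_below[OF \<open>y \<le> v\<close>] using q_nonneg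
    by (auto intro!: sum_nonneg)
  have "p_lt n q v M y + p_eq n q v M y = (\<Sum>j\<in>{1..n}. q j * cdf (M j) y)"
    unfolding p_lt_below[OF \<open>y \<le> v\<close>] p_eq_below[OF \<open>y \<le> v\<close>] sum.distrib[symmetric]
    using RD by (intro sum.cong refl)
      (simp add: distrib_left[symmetric] finite_borel_measure.lessThan_plus_singleton
        real_distribution.finite_borel_measure_M)
  also have "\<dots> \<le> qtot n q"
    unfolding qtot_def using RD q_nonneg
    by (intro sum_mono mult_left_le) (auto simp: real_distribution.cdf_bounded_prob)
  finally show "0 < 1 - p_lt n q v M y - p_eq n q v M y" using \<open>qtot n q < 1\<close> by linarith
qed

lemma sell_prob_nonneg:
  assumes "\<forall>j\<in>{1..n}. real_distribution (M j)" "\<forall>j\<in>{1..n}. 0 \<le> q j" "qtot n q < 1"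
  shows "0 \<le> sell_prob l m n q v M y"
proof (cases "y \<le> v")
  case True
  from profile_probs_bounds[OF assms True] show ?thesis
    using True by (auto simp: sell_prob_sale_poly intro!: sale_poly_nonneg)
qed (simp add: sell_prob_sale_poly)

(* An acceptable penalty is sold with positive probability (all competitors may be absent). *)
lemma sell_prob_pos:
  assumes "\<forall>j\<in>{1..n}. real_distribution (M j)" "\<forall>j\<in>{1..n}. 0 \<le> q j" "qtot n q < 1"
    and "1 \<le> m" and "y \<le> v"
  shows "0 < sell_prob l m n q v M y"
proof -
  let ?pg = "1 - p_lt n q v M y - p_eq n q v M y"
  note bounds = profile_probs_bounds[OF assms(1-3) \<open>y \<le> v\<close>]
  have "0 < ?pg ^ (l-1)" using bounds by simp
  also have "\<dots> \<le> sale_poly (l-1) m (p_lt n q v M y) (p_eq n q v M y) ?pg"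
    using bounds \<open>1 \<le> m\<close> by (intro sale_poly_ge_no_competition) auto
  finally show ?thesis using \<open>y \<le> v\<close> by (simp add: sell_prob_sale_poly)
qed

(* Quoting just below x beats the competitors tying at x: the left limit of the sale
   probability at x is the tie-free sale probability. *)
lemma sell_prob_at_left:
  assumes RD: "\<forall>j\<in>{1..n}. real_distribution (M j)" and "x \<le> v"
  shows "(sell_prob l m n q v M \<longlongrightarrow> sale_poly (l-1) m (p_lt n q v M x) 0 (1 - p_lt n q v M x))
           (at_left x)"
proof -
  have below: "eventually (\<lambda>y. y \<le> v) (at_left x)"
    using eventually_at_left_real[of "x - 1" x] \<open>x \<le> v\<close> by (auto elim: eventually_mono)
  have fbm: "finite_borel_measure (M j)" if "j \<in> {1..n}" for j
    using RD that by (simp add: real_distribution.finite_borel_measure_M)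
  have pl_eq: "eventually (\<lambda>y. p_lt n q v M y = (\<Sum>j\<in>{1..n}. q j * measure (M j) {..<y})) (at_left x)"
    using below by (rule eventually_mono) (rule p_lt_below)
  have pe_eq: "eventually (\<lambda>y. p_eq n q v M y = (\<Sum>j\<in>{1..n}. q j * measure (M j) {y})) (at_left x)"
    using below by (rule eventually_mono) (rule p_eq_below)
  have sp_eq: "eventually (\<lambda>y. sell_prob l m n q v M y = sale_poly (l-1) m (p_lt n q v M y)
      (p_eq n q v M y) (1 - p_lt n q v M y - p_eq n q v M y)) (at_left x)"
    using below by (rule eventually_mono) (simp add: sell_prob_sale_poly)
  have pl: "(p_lt n q v M \<longlongrightarrow> p_lt n q v M x) (at_left x)"
    unfolding tendsto_cong[OF pl_eq] p_lt_below[OF \<open>x \<le> v\<close>]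
    by (intro tendsto_sum tendsto_mult_left finite_borel_measure.measure_lessThan_at_left fbm)
  have "((\<lambda>y. \<Sum>j\<in>{1..n}. q j * measure (M j) {y}) \<longlongrightarrow> (\<Sum>j\<in>{1..n}. q j * 0)) (at_left x)"
    by (intro tendsto_sum tendsto_mult_left finite_borel_measure.measure_singleton_at_left fbm)
  then have pe: "(p_eq n q v M \<longlongrightarrow> 0) (at_left x)"
    unfolding tendsto_cong[OF pe_eq] by simp
  have "((\<lambda>y. sale_poly (l-1) m (p_lt n q v M y) (p_eq n q v M y) (1 - p_lt n q v M y - p_eq n q v M y))
          \<longlongrightarrow> sale_poly (l-1) m (p_lt n q v M x) 0 (1 - p_lt n q v M x - 0)) (at_left x)"
    by (intro tendsto_sale_poly tendsto_diff tendsto_const pl pe)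
  then show ?thesis
    unfolding tendsto_cong[OF sp_eq] by simp
qed

lemma profit_undercuts_atom:
  assumes RD: "\<forall>j\<in>{1..n}. real_distribution (M j)" and q_nonneg: "\<forall>j\<in>{1..n}. 0 \<le> q j"
    and "qtot n q < 1" and "1 \<le> m" and "m < l" and "x \<le> v"
    and tie: "0 < p_eq n q v M x" and margin: "c < f j x" and cont: "isCont (f j) x"
  shows "\<exists>y. profit l m n q f c v M j x < profit l m n q f c v M j y"
proof -
  let ?L = "sale_poly (l-1) m (p_lt n q v M x) 0 (1 - p_lt n q v M x)"
  note bounds = profile_probs_bounds[OF RD q_nonneg \<open>qtot n q < 1\<close> \<open>x \<le> v\<close>]
  have "sell_prob l m n q v M x < ?L"
    using sale_poly_tie_loss[of "p_lt n q v M x" "p_eq n q v M x" "1 - p_lt n q v M x - p_eq n q v M x"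
        m "l-1"] bounds tie \<open>1 \<le> m\<close> \<open>m < l\<close> \<open>x \<le> v\<close>
    by (simp add: sell_prob_sale_poly)
  then have jump: "profit l m n q f c v M j x < (f j x - c) * ?L"
    using margin by (simp add: profit_def)
  have "(f j \<longlongrightarrow> f j x) (at_left x)"
    using cont by (simp add: filterlim_at_split isCont_def)
  then have "(profit l m n q f c v M j \<longlongrightarrow> (f j x - c) * ?L) (at_left x)"
    unfolding profit_def[abs_def]
    by (intro tendsto_mult tendsto_diff tendsto_const sell_prob_at_left RD \<open>x \<le> v\<close>)
  from order_tendstoD(1)[OF this jump]
  have "eventually (\<lambda>y. profit l m n q f c v M j x < profit l m n q f c v M j y) (at_left x)" .
  then show ?thesis
    using eventually_happens'[OF trivial_limit_at_left_real] by blast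
qed

lemma profit_pos_at_max_penalty:
  assumes "\<forall>j\<in>{1..n}. real_distribution (M j)" "\<forall>j\<in>{1..n}. 0 \<le> q j" "qtot n q < 1"
    and "1 \<le> m" and "i \<in> {1..n}" and "c < f 1 v"
    and f_order: "\<forall>i\<in>{1..n}. \<forall>j\<in>{1..n}. i < j \<longrightarrow> (\<forall>x. f i x < f j x)"
  shows "0 < profit l m n q f c v M i v"
proof -
  have "f 1 v \<le> f i v" using \<open>i \<in> {1..n}\<close> f_order by (cases "i = 1") (auto simp: less_imp_le)
  then show ?thesis using \<open>c < f 1 v\<close> sell_prob_pos[OF assms(1-4) order_refl]
    by (simp add: profit_def)
qed

lemma profit_pos_imp:
  assumes "\<forall>j\<in>{1..n}. real_distribution (M j)" "\<forall>j\<in>{1..n}. 0 \<le> q j" "qtot n q < 1"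
    and pos: "0 < profit l m n q f c v M j x"
  shows "x \<le> v" "c < f j x"
proof -
  show "x \<le> v" using pos by (cases "x \<le> v") (simp_all add: profit_def sell_prob_def)
  have "0 \<le> sell_prob l m n q v M x" by (rule sell_prob_nonneg[OF assms(1-3)])
  then show "c < f j x" using pos by (auto simp: profit_def zero_less_mult_iff)
qed

lemma p_eq_ge_atom:
  assumes q_nonneg: "\<forall>j\<in>{1..n}. 0 \<le> q j" and "i \<in> {1..n}" and "x \<le> v"
  shows "q i * measure (M i) {x} \<le> p_eq n q v M x"
  unfolding p_eq_below[OF \<open>x \<le> v\<close>]
  by (rule member_le_sum[where f="\<lambda>j. q j * measure (M j) {x}"]) (use assms in auto)

(* A payoff that no distribution beats in expectation is not beaten by any single point,
   as point masses are admissible deviations. *)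
lemma payoff_le_of_no_deviation:
  fixes P :: "real \<Rightarrow> real"
  assumes no_dev: "\<forall>M'. real_distribution M' \<and> integrable M' P \<longrightarrow> (\<integral>z. P z \<partial>M') \<le> E"
    and meas: "P \<in> borel_measurable borel"
  shows "P y \<le> E"
proof -
  let ?R = "return borel y"
  interpret R: prob_space ?R by (rule prob_space_return) simp
  have "real_distribution ?R" by unfold_locales simp
  moreover have "integrable ?R P"
    by (rule integrable_cong_AE_imp[of _ "\<lambda>_. P y"]) (use meas in \<open>auto simp: AE_return\<close>)
  ultimately have "(\<integral>z. P z \<partial>?R) \<le> E" using no_dev by blast
  then show ?thesis using integral_return[of y borel P] meas by simp
qed

lemma atom_is_best_response:
  fixes P :: "real \<Rightarrow> real"
  assumes "real_distribution N" and intP: "integrable N P"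
    and P_le: "\<forall>y. P y \<le> (\<integral>z. P z \<partial>N)" and atom: "0 < measure N {x}"
  shows "(\<integral>z. P z \<partial>N) \<le> P x"
proof (rule ccontr)
  interpret real_distribution N by fact
  define E where "E = (\<integral>z. P z \<partial>N)"
  assume "\<not> (\<integral>z. P z \<partial>N) \<le> P x"
  then have lt: "P x < E" by (simp add: E_def)
  define g where "g = (\<lambda>z. E - (E - P x) * indicator {x} z :: real)"
  have P_le_g: "P z \<le> g z" for z using P_le lt by (simp add: g_def E_def indicator_def)
  have int_ind: "integrable N (indicator {x} :: real \<Rightarrow> real)"
    by (rule integrable_real_indicator) (auto simp: emeasure_finite less_top[symmetric])
  have int_g: "integrable N g" unfolding g_def
    by (intro Bochner_Integration.integrable_diff integrable_mult_right int_ind integrable_const)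
  have "E \<le> integral\<^sup>L N g" unfolding E_def using intP int_g P_le_g by (rule integral_mono)
  also have "\<dots> = E - (E - P x) * measure N {x}"
    unfolding g_def using int_ind by (simp add: integral_diff prob_space[unfolded space_eq_univ])
  finally have "(E - P x) * measure N {x} \<le> 0" by simp
  with lt atom show False by (simp add: mult_le_0_iff)
qed

theorem theorem1:
  fixes l m n :: nat and q :: "nat \<Rightarrow> real" and f :: "nat \<Rightarrow> real \<Rightarrow> real"
    and c v :: real and M :: "nat \<Rightarrow> real measure"
  assumes "2 \<le> l" and "1 \<le> m" and "m < l"
    and "\<forall>i\<in>{1..n}. 0 < q i"
    and "0 < qtot n q" and "qtot n q < 1"
    and "\<forall>i\<in>{1..n}. continuous_on UNIV (f i) \<and> strict_mono (f i)"
    and "\<forall>i\<in>{1..n}. \<forall>j\<in>{1..n}. i < j \<longrightarrow> (\<forall>x. f i x < f j x)"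
    and "0 < c"
    and "c < f 1 v"
    and "\<forall>j\<in>{1..n}. \<forall>k\<in>{1..n}. j < k \<longrightarrow> (\<forall>x y. y < x \<and> c < f j y \<longrightarrow>
           (f j y - c) / (f k y - c) < (f j x - c) / (f k x - c))"
    and "sym_NE l m n q f c v M"
  shows "\<forall>i\<in>{1..n}. \<forall>x. isCont (cdf (M i)) x"
proof (intro ballI allI)
  fix i x assume i: "i \<in> {1..n}"
  define P where "P = profit l m n q f c v M i"
  define E where "E = (\<integral>z. P z \<partial>M i)"
  have RD: "\<forall>j\<in>{1..n}. real_distribution (M j)" and intP: "integrable (M i) P"
    and no_dev: "\<forall>M'. real_distribution M' \<and> integrable M' P \<longrightarrow> (\<integral>z. P z \<partial>M') \<le> E"
    using \<open>sym_NE l m n q f c v M\<close> i unfolding sym_NE_def P_def E_def by blast+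
  interpret Mi: real_distribution "M i" using RD i by blast
  have q_nonneg: "\<forall>j\<in>{1..n}. 0 \<le> q j" using \<open>\<forall>i\<in>{1..n}. 0 < q i\<close> by (simp add: less_imp_le)
  have "P \<in> borel_measurable borel"
    using borel_measurable_integrable[OF intP] measurable_cong_sets[OF Mi.events_eq_borel refl] by blast
  then have P_le_E: "P y \<le> E" for y using no_dev by (intro payoff_le_of_no_deviation)
  have E_pos: "0 < E"
    using P_le_E[of v] profit_pos_at_max_penalty[where l=l, OF RD q_nonneg \<open>qtot n q < 1\<close>
        \<open>1 \<le> m\<close> i \<open>c < f 1 v\<close> \<open>\<forall>i\<in>{1..n}. \<forall>j\<in>{1..n}. i < j \<longrightarrow> (\<forall>x. f i x < f j x)\<close>]
    unfolding P_def by linarith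
  show "isCont (cdf (M i)) x"
  proof (rule ccontr)
    assume "\<not> isCont (cdf (M i)) x"
    then have atom: "0 < measure (M i) {x}" by (simp add: Mi.isCont_cdf order_less_le)
    have "E \<le> P x"
      unfolding E_def using Mi.real_distribution_axioms intP P_le_E atom
      by (intro atom_is_best_response) (auto simp: E_def)
    then have P_pos: "0 < P x" using E_pos by simp
    note margin = profit_pos_imp[OF RD q_nonneg \<open>qtot n q < 1\<close> P_pos[unfolded P_def]]
    have "0 < q i * measure (M i) {x}" using \<open>\<forall>i\<in>{1..n}. 0 < q i\<close> i atom by simp
    also have "\<dots> \<le> p_eq n q v M x" by (rule p_eq_ge_atom[OF q_nonneg i margin(1)])
    finally have tie: "0 < p_eq n q v M x" .
    have "isCont (f i) x"
      using \<open>\<forall>i\<in>{1..n}. continuous_on UNIV (f i) \<and> strict_mono (f i)\<close> i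
      by (simp add: continuous_on_eq_continuous_at)
    then obtain y where "P x < P y" unfolding P_def
      using profit_undercuts_atom[where f=f and j=i, OF RD q_nonneg \<open>qtot n q < 1\<close> \<open>1 \<le> m\<close>
          \<open>m < l\<close> margin(1) tie margin(2)] by blast
    with \<open>E \<le> P x\<close> P_le_E[of y] show False by simp
  qed
qed

end
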